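(* Consider a single positioning infrastructure with $N_{\text{anc}}$ anchors providing ranging information, of which $N_{\text{adv}}$ are manipulated by an uncoordinated attacker, and let $N_{\text{min}}$ be the minimum number of anchors required for positioning. Suppose that $N_{\text{anc}}-N_{\text{adv}}\ge N_{\text{min}}$. Then uncoordinated spoofing can be detected, i.e., there is at least one benign subset position estimate, and it is almost surely inconsistent with the spoofed position estimates.
   Context: Idealized model of subset-based integrity monitoring: a platform at unknown true position $\mathbf{p}_{\text{usr}}(t)\in\mathbb{R}^3$ receives ranging measurements from anchors with known positions (e.g., GNSS satellites, for which $N_{\text{min}}=4$). For every subset of anchors of size at least $N_{\text{min}}$, a position estimate is computed by multilateration. Positioning noise and uncertainties are taken to be negligible (zero) while attacker-induced deviations are preserved, and the anchor geometry is good, so every subset consisting only of benign measurements of size at least $N_{\text{min}}$ yields exactly $\mathbf{p}_{\text{usr}}(t)$. "Uncoordinated spoofing" means the manipulated ranging values are chosen independently (potentially randomly), so estimates from subsets involving manipulated measurements are random positions. *)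

theory Defs
  imports "HOL-Probability.Probability"
begin

text \<open>A subset estimate is a random position
  (real^3 valued random variable on a probability space).\<close>

definition admissible_subset :: "'a set \<Rightarrow> nat \<Rightarrow> 'a set \<Rightarrow> bool" where
  "admissible_subset Anc Nmin S \<longleftrightarrow> S \<subseteq> Anc \<and> Nmin \<le> card S"

definition benign_subset :: "'a set \<Rightarrow> 'a set \<Rightarrow> nat \<Rightarrow> 'a set \<Rightarrow> bool" where
  "benign_subset Anc Adv Nmin S \<longleftrightarrow> admissible_subset Anc Nmin S \<and> S \<inter> Adv = {}"

definition spoofed_subset :: "'a set \<Rightarrow> 'a set \<Rightarrow> nat \<Rightarrow> 'a set \<Rightarrow> bool" where
  "spoofed_subset Anc Adv Nmin S \<longleftrightarrow> admissible_subset Anc Nmin S \<and> S \<inter> Adv \<noteq> {}"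

end

theory Submission
  imports Defs
begin

text \<open>The complement of the manipulated anchors is a benign subset, and its estimate is the
  true position at every outcome. Each of the finitely many spoofed estimates hits any fixed
  point only on a null set, so almost surely none of them equals the benign estimate.\<close>

lemma benign_subset_Diff:
  assumes "finite Anc" and "Adv \<subseteq> Anc" and "Nmin \<le> card Anc - card Adv"
  shows "benign_subset Anc Adv Nmin (Anc - Adv)"
proof -
  have "card (Anc - Adv) = card Anc - card Adv"
    using assms(1,2) by (simp add: card_Diff_subset finite_subset)
  with assms(3) show ?thesis
    by (auto simp: benign_subset_def admissible_subset_def)
qed

lemma finite_spoofed_subsets:
  assumes "finite Anc"
  shows "finite {S. spoofed_subset Anc Adv Nmin S}"
  by (rule finite_subset[of _ "Pow Anc"])
    (auto simp: spoofed_subset_def admissible_subset_def assms)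

lemma (in finite_measure) AE_neq_if_measure_eq_0:
  fixes X :: "'a \<Rightarrow> 'b::t1_space"
  assumes "X \<in> borel_measurable M" and "measure M {w \<in> space M. X w = p} = 0"
  shows "AE w in M. X w \<noteq> p"
proof (rule AE_I')
  have "{w \<in> space M. X w = p} = X -` {p} \<inter> space M"
    by auto
  also have "\<dots> \<in> sets M"
    using measurable_sets[OF assms(1)] by simp
  finally show "{w \<in> space M. X w = p} \<in> null_sets M"
    using assms(2) by (simp add: emeasure_eq_measure null_sets_def)
qed auto

theorem proposition1:
  fixes M :: "'w measure"
    and Anc Adv :: "'a set"
    and Nmin :: nat
    and est :: "'a set \<Rightarrow> 'w \<Rightarrow> real ^ 3"
    and p_usr :: "real ^ 3"
  assumes "prob_space M"
    and "finite Anc"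
    and "Adv \<subseteq> Anc"
    and "card Anc - card Adv \<ge> Nmin"
    \<comment> \<open>noise-free, good geometry: every benign subset yields the true position\<close>
    and "\<And>S w. benign_subset Anc Adv Nmin S \<Longrightarrow> w \<in> space M \<Longrightarrow> est S w = p_usr"
    \<comment> \<open>uncoordinated spoofing: spoofed subset estimates are random positions without atoms\<close>
    and "\<And>S. spoofed_subset Anc Adv Nmin S \<Longrightarrow> est S \<in> borel_measurable M"
    and "\<And>S p. spoofed_subset Anc Adv Nmin S \<Longrightarrow>
           measure M {w \<in> space M. est S w = p} = 0"
  shows "\<exists>S. benign_subset Anc Adv Nmin S \<and>
           (AE w in M. \<forall>S'. spoofed_subset Anc Adv Nmin S' \<longrightarrow> est S' w \<noteq> est S w)"
proof -
  interpret prob_space M by fact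
  let ?Spoofed = "{S'. spoofed_subset Anc Adv Nmin S'}"
  have benign: "benign_subset Anc Adv Nmin (Anc - Adv)"
    using assms(2-4) by (rule benign_subset_Diff)
  have "AE w in M. \<forall>S'\<in>?Spoofed. est S' w \<noteq> p_usr"
    using finite_spoofed_subsets[OF assms(2)]
    by (rule eventually_ball_finite) (auto intro: AE_neq_if_measure_eq_0 assms(6,7))
  then have "AE w in M. \<forall>S'. spoofed_subset Anc Adv Nmin S' \<longrightarrow> est S' w \<noteq> est (Anc - Adv) w"
    using AE_space by eventually_elim (simp add: assms(5)[OF benign])
  with benign show ?thesis
    by blast
qed

end
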